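(* Let $\{X_n,n\geq1\}$ be a $\varphi$-mixing sequence of random variables with common marginal distribution function $F$, whose mixing coefficients satisfy $\sum_{n=1}^\infty\varphi^{1/2}(n)<\infty$. Fix $p\in(0,1)$ and let $\xi_p=\inf\{x:F(x)\geq p\}$. Assume that $F$ possesses a positive continuous density $f$ in a neighborhood $\mathscr{N}_p$ of $\xi_p$ such that $0<d=\sup\{f(x):x\in\mathscr{N}_p\}<\infty$. Let $C_3=4\big[1+4\sum_{n=1}^\infty\varphi^{1/2}(n)\big]$. For any $\theta>0$ put $$\tau_n=\frac{\sqrt{16C_3+\theta}\,(\log n)^{3/2}}{n^{1/2}(\log\log n)^{1/2}},\qquad \mathscr{E}_n=[\xi_p-\tau_n,\xi_p+\tau_n].$$ Then with probability 1, $$\sup_{x\in\mathscr{E}_n}\big|(F_n(x)-F(x))-(F_n(\xi_p)-p)\big|\leq(1+d)\left(\frac{(16C_3+\theta)\log n}{n}\right)^{1/2}$$ for all $n$ sufficiently large.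
   Context: All random variables are defined on a probability space $(\Omega,\mathcal{F},P)$. $F_n(x)=\frac1n\sum_{i=1}^n I(X_i\leq x)$ is the empirical distribution function of $X_1,\dots,X_n$. For $n\leq m$ let $\mathcal{F}_n^m=\sigma(X_i,n\leq i\leq m)$. For sub-$\sigma$-algebras $\mathcal{B},\mathcal{R}$ let $\varphi(\mathcal{B},\mathcal{R})=\sup_{A\in\mathcal{B},B\in\mathcal{R},P(A)>0}|P(B\mid A)-P(B)|$, and the mixing coefficients are $\varphi(n)=\sup_{k\geq1}\varphi(\mathcal{F}_1^k,\mathcal{F}_{k+n}^\infty)$. The sequence is called $\varphi$-mixing if $\varphi(n)\downarrow0$ as $n\to\infty$. *)

theory Defs
  imports "HOL-Probability.Probability"
begin

definition gen_sigma :: "'a measure \<Rightarrow> (nat \<Rightarrow> 'a \<Rightarrow> real) \<Rightarrow> nat set \<Rightarrow> 'a set set" where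
  "gen_sigma M X I = sigma_sets (space M)
     (\<Union>i\<in>I. {X i -` B \<inter> space M | B. B \<in> sets borel})"

definition phi_coef :: "'a measure \<Rightarrow> 'a set set \<Rightarrow> 'a set set \<Rightarrow> real" where
  "phi_coef M \<B> \<R> = Sup {\<bar>measure M (A \<inter> C) / measure M A - measure M C\<bar> | A C.
       A \<in> \<B> \<and> C \<in> \<R> \<and> measure M A > 0}"

definition phi_mix :: "'a measure \<Rightarrow> (nat \<Rightarrow> 'a \<Rightarrow> real) \<Rightarrow> nat \<Rightarrow> real" where
  "phi_mix M X n = (SUP k\<in>{1..}. phi_coef M (gen_sigma M X {1..k}) (gen_sigma M X {k+n..}))"

definition emp_df :: "(nat \<Rightarrow> 'a \<Rightarrow> real) \<Rightarrow> nat \<Rightarrow> 'a \<Rightarrow> real \<Rightarrow> real" where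
  "emp_df X n \<omega> x = (1 / real n) * (\<Sum>i=1..n. if X i \<omega> \<le> x then 1 else 0)"

end

theory Submission
  imports Defs "HOL-Real_Asymp.Real_Asymp"
begin

(*
  Write F_n(x) - F(x) = S_n(x) / n, where S_n(x) sums the centred indicators 1{X_i <= x} - F(x).
  Cut {1..n} into consecutive blocks of length q ~ n^(1/3) and split them by the parity of their
  index: blocks of equal parity are q apart, so phi-mixing factorises the moment generating
  function of their sum up to a term of order (n/q) phi(q+1), which stays bounded because phi is
  decreasing with summable square root, whence phi(k) = O(k^-2). The moment generating function
  of a single block is controlled by the variance bound E S_B^2 <= |B| (1 + 2 sum_k phi(k)), and
  Chernoff's inequality gives P(|S_n(x)| >= n eta_n / 2) = O(n^(-4/3)) for
  eta_n = sqrt((16 C3 + theta) log n / n). A grid of O(n^(1/12)) points of mesh eta_n covers the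
  window around xi_p; monotonicity of F_n and F and the bound d on the density carry the estimate
  from the grid to the whole window at the price d eta_n, and Borel-Cantelli applies since
  n^(-5/4) is summable.
*)

lemma exp_le_1_plus_quadratic:
  fixes u :: real
  assumes "\<bar>u\<bar> \<le> 1/4"
  shows "exp u \<le> 1 + u + 3/4 * u\<^sup>2"
proof -
  obtain \<tau> where t: "\<bar>\<tau>\<bar> \<le> \<bar>u\<bar>" and e: "exp u = (\<Sum>m<2. u ^ m / fact m) + exp \<tau> / fact 2 * u ^ 2"
    using Maclaurin_exp_le[of u 2] by blast
  have "exp \<tau> \<le> exp \<bar>\<tau>\<bar>" by simp
  also have "exp \<bar>\<tau>\<bar> \<le> 1 + 2 * \<bar>\<tau>\<bar>"
    using exp_bound_lemma[of "\<bar>\<tau>\<bar>"] t assms by simp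
  finally have "exp \<tau> \<le> 3/2" using t assms by linarith
  then have "exp \<tau> * u\<^sup>2 \<le> 3/2 * u\<^sup>2" by (intro mult_right_mono) auto
  then have "exp \<tau> / fact 2 * u ^ 2 \<le> 3/4 * u\<^sup>2" by (simp add: fact_numeral)
  moreover have "(\<Sum>m<2. u ^ m / fact m) = 1 + u" by (simp add: numeral_2_eq_2)
  ultimately show ?thesis using e by simp
qed

lemma prod_one_plus_le_exp_sum:
  fixes a :: "'a \<Rightarrow> real"
  assumes "\<And>i. i \<in> I \<Longrightarrow> 0 \<le> a i"
  shows "(\<Prod>i\<in>I. 1 + a i) \<le> exp (\<Sum>i\<in>I. a i)"
proof (cases "finite I")
  case True
  then have "(\<Prod>i\<in>I. 1 + a i) \<le> (\<Prod>i\<in>I. exp (a i))"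
    using assms by (intro prod_mono) (auto simp: add_nonneg_nonneg)
  with True show ?thesis by (simp add: exp_sum)
qed simp

lemma isCont_if_increments_le:
  fixes F :: "real \<Rightarrow> real"
  assumes "mono F" "e > 0"
    and incr: "\<And>a b. \<xi> - e \<le> a \<Longrightarrow> a \<le> b \<Longrightarrow> b \<le> \<xi> + e \<Longrightarrow> F b - F a \<le> d * (b - a)"
  shows "isCont F \<xi>"
  unfolding isCont_def LIM_eq
proof (intro allI impI)
  fix r :: real assume "r > 0"
  define s where "s = min e (r / (\<bar>d\<bar> + 1))"
  have "\<bar>F y - F \<xi>\<bar> < r" if "\<bar>y - \<xi>\<bar> < s" for y
  proof -
    have "\<bar>F y - F \<xi>\<bar> \<le> d * \<bar>y - \<xi>\<bar>"
      using that incr[of y \<xi>] incr[of \<xi> y] monoD[OF \<open>mono F\<close>, of y \<xi>] monoD[OF \<open>mono F\<close>, of \<xi> y]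
      by (cases "y \<le> \<xi>") (auto simp: s_def)
    also have "\<dots> \<le> \<bar>d\<bar> * \<bar>y - \<xi>\<bar>" by (simp add: mult_right_mono)
    also have "\<dots> < r"
      using that \<open>r > 0\<close> by (auto simp: s_def field_simps min_less_iff_conj intro: le_less_trans[OF mult_left_mono])
    finally show ?thesis .
  qed
  moreover have "s > 0" using \<open>e > 0\<close> \<open>r > 0\<close> by (simp add: s_def)
  ultimately show "\<exists>s>0. \<forall>y. y \<noteq> \<xi> \<and> norm (y - \<xi>) < s \<longrightarrow> norm (F y - F \<xi>) < r"
    by auto
qed

lemma quantile_eq:
  fixes F :: "real \<Rightarrow> real"
  assumes "mono F" "(F \<longlongrightarrow> 0) at_bot" "(F \<longlongrightarrow> 1) at_top" "0 < p" "p < 1"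
    and cont: "isCont F (Inf {x. p \<le> F x})"
  shows "F (Inf {x. p \<le> F x}) = p"
proof -
  define S where "S = {x. p \<le> F x}"
  define \<xi> where "\<xi> = Inf S"
  obtain x1 where "p < F x1"
    using order_tendstoD(1)[OF assms(3) \<open>p < 1\<close>] by (auto simp: eventually_at_top_linorder)
  then have S_ne: "S \<noteq> {}" by (auto simp: S_def intro!: exI[of _ x1])
  obtain x0 where x0: "F x0 < p"
    using order_tendstoD(2)[OF assms(2) \<open>0 < p\<close>] by (auto simp: eventually_at_bot_linorder)
  have S_bdd: "bdd_below S"
  proof (rule bdd_belowI)
    fix y assume "y \<in> S"
    then show "x0 \<le> y" using x0 monoD[OF \<open>mono F\<close>, of y x0] by (force simp: S_def)
  qed
  have "p \<le> F \<xi>"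
  proof (rule tendsto_lowerbound)
    show "(F \<longlongrightarrow> F \<xi>) (at_right \<xi>)"
      using cont by (simp add: \<xi>_def S_def isCont_def filterlim_at_split)
    have "p \<le> F y" if y: "\<xi> < y" for y
    proof -
      obtain s where "s \<in> S" "s < y" using cInf_lessD[OF S_ne, of y] y by (auto simp: \<xi>_def)
      then show ?thesis using monoD[OF \<open>mono F\<close>, of s y] by (auto simp: S_def)
    qed
    then show "\<forall>\<^sub>F y in at_right \<xi>. p \<le> F y" by (auto simp: eventually_at_right_less eventually_at_filter)
  qed simp
  moreover have "F \<xi> \<le> p"
  proof (rule tendsto_upperbound)
    show "(F \<longlongrightarrow> F \<xi>) (at_left \<xi>)"
      using cont by (simp add: \<xi>_def S_def isCont_def filterlim_at_split)
    have "F y \<le> p" if "y < \<xi>" for y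
      using that cInf_lower[OF _ S_bdd, of y] by (force simp: S_def \<xi>_def)
    then show "\<forall>\<^sub>F y in at_left \<xi>. F y \<le> p" by (auto simp: eventually_at_filter)
  qed simp
  ultimately show ?thesis by (simp add: \<xi>_def S_def)
qed

lemma increment_le_Sup_density:
  fixes F f :: "real \<Rightarrow> real"
  assumes dens: "\<And>a b. a \<le> b \<Longrightarrow> {a..b} \<subseteq> N \<Longrightarrow> (f has_integral (F b - F a)) {a..b}"
    and "bdd_above (f ` N)" "a \<le> b" "{a..b} \<subseteq> N"
  shows "F b - F a \<le> Sup (f ` N) * (b - a)"
proof -
  have "((\<lambda>x. Sup (f ` N)) has_integral (b - a) * Sup (f ` N)) {a..b}"
    using has_integral_const_real[of "Sup (f ` N)" a b] assms(3) by simp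
  from has_integral_le[OF dens[OF assms(3,4)] this] show ?thesis
    using assms(2,4) by (force intro: cSup_upper simp: mult.commute)
qed

lemma increments_le_Sup_density_near:
  fixes F f :: "real \<Rightarrow> real"
  assumes "open N" "\<xi> \<in> N"
    and dens: "\<And>a b. a \<le> b \<Longrightarrow> {a..b} \<subseteq> N \<Longrightarrow> (f has_integral (F b - F a)) {a..b}"
    and bdd: "bdd_above (f ` N)"
  obtains e where "0 < e"
    "\<And>a b. \<xi> - e \<le> a \<Longrightarrow> a \<le> b \<Longrightarrow> b \<le> \<xi> + e \<Longrightarrow> F b - F a \<le> Sup (f ` N) * (b - a)"
proof -
  obtain e where "0 < e" "cball \<xi> e \<subseteq> N"
    using assms(1,2) open_contains_cball by blast
  then show ?thesis
  proof (intro that)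
    fix a b assume "\<xi> - e \<le> a" "a \<le> b" "b \<le> \<xi> + e"
    then have "{a..b} \<subseteq> cball \<xi> e" by (auto simp: cball_def dist_real_def abs_le_iff)
    then show "F b - F a \<le> Sup (f ` N) * (b - a)"
      using \<open>cball \<xi> e \<subseteq> N\<close> \<open>a \<le> b\<close> by (intro increment_le_Sup_density[OF dens bdd]) auto
  qed
qed

lemma mono_deviation_le_on_grid:
  fixes G \<Phi> :: "real \<Rightarrow> real" and K :: nat
  assumes "mono G" "mono \<Phi>" "h > 0" "lo \<le> x" "x \<le> lo + real K * h"
    and grid: "\<And>k. k \<le> K + 1 \<Longrightarrow> \<bar>G (lo + real k * h) - \<Phi> (lo + real k * h)\<bar> \<le> \<delta>"
    and step: "\<And>k. k \<le> K \<Longrightarrow> \<Phi> (lo + (real k + 1) * h) - \<Phi> (lo + real k * h) \<le> D"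
  shows "\<bar>G x - \<Phi> x\<bar> \<le> \<delta> + D"
proof -
  define k where "k = nat \<lfloor>(x - lo) / h\<rfloor>"
  have "real k \<le> (x - lo) / h" "(x - lo) / h < real k + 1"
    using assms(3,4) by (auto simp: k_def)
  then have lo_k: "lo + real k * h \<le> x" and k_hi: "x \<le> lo + (real k + 1) * h"
    using assms(3) by (auto simp: field_simps)
  have "real k * h \<le> real K * h" using lo_k assms(5) by linarith
  then have "k \<le> K" using assms(3) by simp
  have grid1: "\<bar>G (lo + (real k + 1) * h) - \<Phi> (lo + (real k + 1) * h)\<bar> \<le> \<delta>"
    using grid[of "k + 1"] \<open>k \<le> K\<close> by (simp add: add.commute)
  show ?thesis
    using grid[of k] grid1 step[of k] \<open>k \<le> K\<close>
      monoD[OF assms(1) lo_k] monoD[OF assms(1) k_hi] monoD[OF assms(2) lo_k] monoD[OF assms(2) k_hi]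
    unfolding abs_le_iff by linarith
qed

lemma mono_window_deviation_le:
  fixes G \<Phi> :: "real \<Rightarrow> real" and K :: nat and h \<tau> \<xi> d x :: real
  assumes "mono G" "mono \<Phi>" "0 < h" "2 * \<tau> \<le> K * h" "K * h \<le> 2 * \<tau> + h"
    and grid: "\<And>k. k \<le> K + 1 \<Longrightarrow> \<bar>G (\<xi> - \<tau> + k * h) - \<Phi> (\<xi> - \<tau> + k * h)\<bar> \<le> h / 2"
    and centre: "\<bar>G \<xi> - \<Phi> \<xi>\<bar> \<le> h / 2"
    and incr: "\<And>a b. \<xi> - \<tau> \<le> a \<Longrightarrow> a \<le> b \<Longrightarrow> b \<le> \<xi> + \<tau> + 2 * h \<Longrightarrow> \<Phi> b - \<Phi> a \<le> d * (b - a)"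
    and x: "x \<in> {\<xi> - \<tau>..\<xi> + \<tau>}"
  shows "\<bar>(G x - \<Phi> x) - (G \<xi> - \<Phi> \<xi>)\<bar> \<le> (1 + d) * h"
proof -
  have "\<bar>G x - \<Phi> x\<bar> \<le> h / 2 + d * h"
  proof (rule mono_deviation_le_on_grid[OF assms(1-3)])
    show "\<xi> - \<tau> \<le> x" "x \<le> \<xi> - \<tau> + real K * h" using assms(4) x by auto
    show "\<bar>G (\<xi> - \<tau> + real k * h) - \<Phi> (\<xi> - \<tau> + real k * h)\<bar> \<le> h / 2" if "k \<le> K + 1" for k
      using grid[OF that] .
    show "\<Phi> (\<xi> - \<tau> + (real k + 1) * h) - \<Phi> (\<xi> - \<tau> + real k * h) \<le> d * h" if "k \<le> K" for k
    proof -
      have "real k * h \<le> real K * h" using that \<open>0 < h\<close> by (intro mult_right_mono) auto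
      moreover have "(real k + 1) * h = real k * h + h" by (simp add: distrib_right)
      ultimately have "\<xi> - \<tau> + (real k + 1) * h \<le> \<xi> + \<tau> + 2 * h" using assms(5) by linarith
      then have "\<Phi> (\<xi> - \<tau> + (real k + 1) * h) - \<Phi> (\<xi> - \<tau> + real k * h)
          \<le> d * ((\<xi> - \<tau> + (real k + 1) * h) - (\<xi> - \<tau> + real k * h))"
        using \<open>0 < h\<close> by (intro incr) (auto simp: algebra_simps)
      then show ?thesis by (simp add: algebra_simps)
    qed
  qed
  moreover have "(1 + d) * h = (h / 2 + d * h) + h / 2" by (simp add: algebra_simps)
  ultimately show ?thesis using abs_triangle_ineq4[of "G x - \<Phi> x" "G \<xi> - \<Phi> \<xi>"] centre by linarith
qed

lemma mono_emp_df: "mono (emp_df X n \<omega>)"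
  unfolding emp_df_def by (intro monoI mult_left_mono sum_mono) auto

text \<open>For \<open>c = 16 C3 + \<theta>\<close>, \<open>halfwidth c n\<close> is the half-width \<open>\<tau>_n\<close> of the window and
  \<open>mesh c n\<close> the grid mesh, which is also the rate in the theorem.\<close>

definition mesh :: "real \<Rightarrow> nat \<Rightarrow> real" where
  "mesh c n = sqrt (c * ln (real n) / real n)"

definition halfwidth :: "real \<Rightarrow> nat \<Rightarrow> real" where
  "halfwidth c n = sqrt c * ln (real n) powr (3/2) / (sqrt (real n) * sqrt (ln (ln (real n))))"

definition block_length :: "nat \<Rightarrow> nat" where
  "block_length n = nat \<lceil>real n powr (1/3)\<rceil>"

definition grid_steps :: "real \<Rightarrow> nat \<Rightarrow> nat" where
  "grid_steps c n = nat \<lceil>2 * halfwidth c n / mesh c n\<rceil>"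

lemma mesh_eq: "mesh c n = sqrt c * sqrt (ln (real n) / real n)"
  unfolding mesh_def by (simp add: real_sqrt_mult[symmetric])

lemma mesh_pos: "0 < c \<Longrightarrow> 2 \<le> n \<Longrightarrow> 0 < mesh c n"
  by (simp add: mesh_def)

lemma mesh_nonneg: "0 \<le> c \<Longrightarrow> 0 \<le> mesh c n"
  by (cases "n = 0") (auto simp: mesh_def)

lemma mesh_squared: "0 < c \<Longrightarrow> 1 \<le> n \<Longrightarrow> (mesh c n)\<^sup>2 = c * ln (real n) / real n"
  by (simp add: mesh_def)

lemma block_length_pos: "1 \<le> n \<Longrightarrow> 1 \<le> block_length n"
  unfolding block_length_def by (simp add: Suc_le_eq)

lemma block_length_le: "real (block_length n) \<le> real n powr (1/3) + 1"
  unfolding block_length_def by simp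

lemma le_block_length_cube: "real n \<le> real (block_length n) ^ 3"
proof -
  have "real n = (real n powr (1/3)) ^ 3"
    by (cases "n = 0") (simp_all add: power3_eq_cube powr_add[symmetric])
  also have "\<dots> \<le> real (block_length n) ^ 3"
    unfolding block_length_def by (intro power_mono real_nat_ceiling_ge) simp
  finally show ?thesis .
qed

lemma grid_steps_bounds:
  assumes "0 < mesh c n" "0 \<le> halfwidth c n"
  shows "2 * halfwidth c n \<le> grid_steps c n * mesh c n"
    and "grid_steps c n * mesh c n \<le> 2 * halfwidth c n + mesh c n"
proof -
  have "2 * halfwidth c n / mesh c n \<le> grid_steps c n"
       "grid_steps c n \<le> 2 * halfwidth c n / mesh c n + 1"
    using assms unfolding grid_steps_def by (simp_all add: real_nat_ceiling_ge)
  then show "2 * halfwidth c n \<le> grid_steps c n * mesh c n"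
        "grid_steps c n * mesh c n \<le> 2 * halfwidth c n + mesh c n"
    using assms(1) by (simp_all add: field_simps)
qed

definition window_grid :: "real \<Rightarrow> real \<Rightarrow> nat \<Rightarrow> real set" where
  "window_grid c \<xi> n = insert \<xi> ((\<lambda>k. \<xi> - halfwidth c n + real k * mesh c n) ` {..grid_steps c n + 1})"

lemma finite_window_grid: "finite (window_grid c \<xi> n)"
  by (simp add: window_grid_def)

lemma card_window_grid_le: "card (window_grid c \<xi> n) \<le> grid_steps c n + 3"
proof -
  have "card (window_grid c \<xi> n)
      \<le> card ((\<lambda>k. \<xi> - halfwidth c n + real k * mesh c n) ` {..grid_steps c n + 1}) + 1"
    unfolding window_grid_def by (simp add: card_insert_if)
  also have "\<dots> \<le> card {..grid_steps c n + 1} + 1"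
    by (intro add_right_mono card_image_le) simp
  finally show ?thesis by simp
qed

lemma eventually_halfwidth_nonneg: "0 \<le> c \<Longrightarrow> \<forall>\<^sub>F n in sequentially. 0 \<le> halfwidth c n"
proof -
  assume "0 \<le> c"
  have "\<forall>\<^sub>F n in sequentially. 0 \<le> ln (ln (real n))" by real_asymp
  then show ?thesis
    by eventually_elim (use \<open>0 \<le> c\<close> in \<open>auto simp: halfwidth_def intro!: divide_nonneg_nonneg\<close>)
qed

lemma tendsto_halfwidth_plus_mesh: "((\<lambda>n. halfwidth c n + 2 * mesh c n) \<longlongrightarrow> 0) sequentially"
proof -
  have "((\<lambda>n. ln (real n) powr (3/2) / (sqrt (real n) * sqrt (ln (ln (real n))))) \<longlongrightarrow> 0) sequentially"
    "((\<lambda>n. sqrt (ln (real n) / real n)) \<longlongrightarrow> 0) sequentially"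
    by real_asymp+
  then show ?thesis
    unfolding halfwidth_def mesh_eq mult.assoc[symmetric] times_divide_eq_right[symmetric]
    by (intro tendsto_add_zero tendsto_mult_right_zero)
qed

lemma eventually_mesh_block_length_le:
  assumes "0 \<le> c"
  shows "\<forall>\<^sub>F n in sequentially. mesh c n * block_length n \<le> 3/2"
proof -
  have "((\<lambda>n. sqrt (ln (real n) / real n) * (real n powr (1/3) + 1)) \<longlongrightarrow> 0) sequentially"
    by real_asymp
  then have "((\<lambda>n. mesh c n * (real n powr (1/3) + 1)) \<longlongrightarrow> 0) sequentially"
    unfolding mesh_eq mult.assoc by (rule tendsto_mult_right_zero)
  then have "\<forall>\<^sub>F n in sequentially. mesh c n * (real n powr (1/3) + 1) < 3/2"
    by (rule order_tendstoD) simp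
  moreover have "mesh c n * block_length n \<le> mesh c n * (real n powr (1/3) + 1)" for n
    using block_length_le[of n] mesh_nonneg[OF assms] by (rule mult_left_mono)
  ultimately show ?thesis
    by (elim eventually_mono) (meson less_imp_le order_trans)
qed

lemma eventually_grid_steps_le:
  assumes "0 < c"
  shows "\<forall>\<^sub>F n in sequentially. grid_steps c n + 3 \<le> real n powr (1/12)"
proof -
  define g where "g n = ln (real n) powr (3/2) / (sqrt (real n) * sqrt (ln (ln (real n))))" for n :: nat
  define h where "h n = sqrt (ln (real n) / real n)" for n :: nat
  have "\<forall>\<^sub>F n in sequentially. 2 \<le> n" "\<forall>\<^sub>F n in sequentially. 0 \<le> g n"
    "\<forall>\<^sub>F n in sequentially. 2 * g n / h n + 4 \<le> real n powr (1/12)"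
    unfolding g_def h_def by (simp_all add: eventually_ge_at_top) real_asymp+
  then show ?thesis
  proof eventually_elim
    case (elim n)
    have hw: "halfwidth c n = sqrt c * g n" and ms: "mesh c n = sqrt c * h n"
      by (simp_all add: halfwidth_def g_def mesh_eq h_def)
    have "0 < mesh c n" "0 \<le> halfwidth c n" using elim assms by (simp_all add: mesh_pos hw)
    then have "grid_steps c n \<le> 2 * halfwidth c n / mesh c n + 1"
      unfolding grid_steps_def by simp
    also have "2 * halfwidth c n / mesh c n = 2 * g n / h n"
      using assms by (simp add: hw ms)
    finally show ?case using elim by simp
  qed
qed

section \<open>Mixing inequalities\<close>

context prob_space
begin

lemma abs_cond_prob_diff_le_1:
  assumes "A \<in> events" "C \<in> events" "prob A > 0"
  shows "\<bar>prob (A \<inter> C) / prob A - prob C\<bar> \<le> 1"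
proof -
  have "prob (A \<inter> C) \<le> prob A" using assms by (intro finite_measure_mono) auto
  then have "prob (A \<inter> C) / prob A \<le> 1" "0 \<le> prob (A \<inter> C) / prob A"
    using assms(3) by auto
  then show ?thesis using prob_le_1[of C] measure_nonneg[of M C] by linarith
qed

lemma abs_cond_prob_diff_le_phi_coef:
  assumes "\<B> \<subseteq> events" "\<R> \<subseteq> events" "A \<in> \<B>" "C \<in> \<R>" "prob A > 0"
  shows "\<bar>prob (A \<inter> C) / prob A - prob C\<bar> \<le> phi_coef M \<B> \<R>"
  unfolding phi_coef_def
proof (rule cSup_upper)
  show "bdd_above {\<bar>prob (A \<inter> C) / prob A - prob C\<bar> | A C. A \<in> \<B> \<and> C \<in> \<R> \<and> prob A > 0}"
    using assms(1,2) abs_cond_prob_diff_le_1 by (intro bdd_aboveI[where M=1]) blast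
qed (use assms in blast)

lemma phi_coef_le_1:
  assumes "\<B> \<subseteq> events" "\<R> \<subseteq> events" "space M \<in> \<B>" "space M \<in> \<R>"
  shows "phi_coef M \<B> \<R> \<le> 1"
  unfolding phi_coef_def
proof (rule cSup_least)
  show "{\<bar>prob (A \<inter> C) / prob A - prob C\<bar> | A C. A \<in> \<B> \<and> C \<in> \<R> \<and> prob A > 0} \<noteq> {}"
    using assms by (auto intro!: exI[of _ "space M"] simp: prob_space)
qed (use assms(1,2) abs_cond_prob_diff_le_1 in blast)

lemma phi_coef_nonneg:
  assumes "\<B> \<subseteq> events" "\<R> \<subseteq> events" "space M \<in> \<B>" "space M \<in> \<R>"
  shows "0 \<le> phi_coef M \<B> \<R>"
  using abs_cond_prob_diff_le_phi_coef[OF assms(1-4)] by (simp add: prob_space)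

lemma integral_simple_function:
  fixes Y :: "'a \<Rightarrow> real"
  assumes "simple_function M Y"
  shows "integral\<^sup>L M Y = (\<Sum>y\<in>Y ` space M. y * prob (Y -` {y} \<inter> space M))"
proof -
  have "integral\<^sup>L M Y = (\<integral>\<omega>. (\<Sum>y\<in>Y ` space M. y * indicator (Y -` {y} \<inter> space M) \<omega>) \<partial>M)"
    by (intro Bochner_Integration.integral_cong) (auto simp: indicator_def sum.delta' simple_functionD(1)[OF assms])
  also have "\<dots> = (\<Sum>y\<in>Y ` space M. y * prob (Y -` {y} \<inter> space M))"
    using simple_functionD(2)[OF assms]
    by (subst Bochner_Integration.integral_sum)
      (auto intro!: integrable_mult_right integrable_real_indicator simp: Int_absorb2 emeasure_finite less_top[symmetric])
  finally show ?thesis .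
qed

lemma integrable_simple_function:
  fixes f :: "'a \<Rightarrow> real"
  shows "simple_function M f \<Longrightarrow> integrable M f"
  by (intro integrableI_simple_bochner_integrable simple_bochner_integrable.intros) auto

lemma AE_eventually_avoid_finite_unions:
  assumes sets: "\<And>n y. E n y \<in> events"
    and bound: "\<forall>\<^sub>F n in sequentially. finite (P n) \<and> (\<Sum>y\<in>P n. prob (E n y)) \<le> b n"
    and "summable b"
  shows "AE \<omega> in M. \<forall>\<^sub>F n in sequentially. \<forall>y\<in>P n. \<omega> \<notin> E n y"
proof -
  obtain n0 where n0: "\<And>n. n0 \<le> n \<Longrightarrow> finite (P n) \<and> (\<Sum>y\<in>P n. prob (E n y)) \<le> b n"
    using bound by (auto simp: eventually_sequentially)
  define U where "U n = (if n0 \<le> n then \<Union>y\<in>P n. E n y else {})" for n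
  have U_sets: "U n \<in> events" for n
    using n0 sets by (auto simp: U_def)
  have "prob (U n) \<le> b n" if "n0 \<le> n" for n
    using that n0[OF that] sets finite_measure_subadditive_finite[of "P n" "E n"]
    by (auto simp: U_def intro: order_trans)
  then have "summable (\<lambda>n. prob (U n))"
    by (intro summable_comparison_test[OF _ \<open>summable b\<close>]) auto
  then have "AE \<omega> in M. \<forall>\<^sub>F n in sequentially. \<omega> \<in> space M - U n"
    using U_sets by (intro borel_cantelli_AE1) (auto simp: emeasure_finite less_top[symmetric])
  then show ?thesis
    by (rule AE_mp) (auto intro!: AE_I2 elim: eventually_mp[OF _ eventually_ge_at_top[of n0]] simp: U_def)
qed

end

lemma simple_function_prod [intro]:
  assumes "\<And>i. i \<in> I \<Longrightarrow> simple_function M (f i)"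
  shows "simple_function M (\<lambda>x. \<Prod>i\<in>I. f i x :: real)"
proof (cases "finite I")
  case True
  from this assms show ?thesis by induct auto
qed simp

locale random_sequence = prob_space M for M :: "'a measure" +
  fixes X :: "nat \<Rightarrow> 'a \<Rightarrow> real"
  assumes random_variable [measurable]: "\<And>i. X i \<in> borel_measurable M"
begin

definition gen_events :: "nat set \<Rightarrow> 'a set set" where
  "gen_events I = (\<Union>i\<in>I. {X i -` B \<inter> space M | B. B \<in> sets borel})"

text \<open>\<open>gen_sigma M X I\<close> as a measure on \<open>space M\<close>, so that measurability with respect to it
  can be stated with \<open>simple_function\<close> and \<open>borel_measurable\<close>.\<close>

definition gen_measure :: "nat set \<Rightarrow> 'a measure" where
  "gen_measure I = sigma (space M) (gen_events I)"

lemma gen_events_subset: "gen_events I \<subseteq> Pow (space M)"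
  unfolding gen_events_def by auto

lemma sets_gen_measure [simp]: "sets (gen_measure I) = gen_sigma M X I"
  unfolding gen_measure_def gen_sigma_def gen_events_def[symmetric]
  using sets_measure_of[OF gen_events_subset] by simp

lemma space_gen_measure [simp]: "space (gen_measure I) = space M"
  unfolding gen_measure_def using space_measure_of[OF gen_events_subset] by simp

lemma gen_sigma_subset_events: "gen_sigma M X I \<subseteq> events"
  unfolding gen_sigma_def gen_events_def[symmetric]
  by (rule sets.sigma_sets_subset) (auto simp: gen_events_def)

lemma space_in_gen_sigma: "space M \<in> gen_sigma M X I"
  unfolding gen_sigma_def by (rule sigma_sets_top)

lemma gen_sigma_mono: "I \<subseteq> J \<Longrightarrow> gen_sigma M X I \<subseteq> gen_sigma M X J"
  unfolding gen_sigma_def by (intro sigma_sets_mono') blast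

lemma measurable_gen_measure: "i \<in> I \<Longrightarrow> X i \<in> borel_measurable (gen_measure I)"
proof (rule measurableI)
  fix A :: "real set" assume "A \<in> sets borel" "i \<in> I"
  then have "X i -` A \<inter> space M \<in> gen_events I" unfolding gen_events_def by blast
  then show "X i -` A \<inter> space (gen_measure I) \<in> sets (gen_measure I)"
    unfolding sets_gen_measure space_gen_measure gen_sigma_def gen_events_def[symmetric]
    by (rule sigma_sets.Basic)
qed auto

lemma simple_function_gen_measure_mono:
  "simple_function (gen_measure I) f \<Longrightarrow> I \<subseteq> J \<Longrightarrow> simple_function (gen_measure J) f"
  by (erule simple_function_subalgebra) (simp_all add: gen_sigma_mono)

lemma simple_function_gen_measure:
  "simple_function (gen_measure I) f \<Longrightarrow> simple_function M f"
  by (erule simple_function_subalgebra) (simp_all add: gen_sigma_subset_events)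

lemma phi_coef_le_phi_mix:
  "1 \<le> k \<Longrightarrow> phi_coef M (gen_sigma M X {1..k}) (gen_sigma M X {k+g..}) \<le> phi_mix M X g"
  unfolding phi_mix_def using phi_coef_le_1[OF gen_sigma_subset_events gen_sigma_subset_events
      space_in_gen_sigma space_in_gen_sigma]
  by (intro cSUP_upper bdd_aboveI[where M=1]) auto

lemma phi_mix_le_1: "phi_mix M X g \<le> 1"
  unfolding phi_mix_def using phi_coef_le_1[OF gen_sigma_subset_events gen_sigma_subset_events
      space_in_gen_sigma space_in_gen_sigma]
  by (intro cSUP_least) auto

lemma phi_mix_nonneg: "0 \<le> phi_mix M X g"
  using phi_coef_le_phi_mix[of 1 g] phi_coef_nonneg[OF gen_sigma_subset_events gen_sigma_subset_events
      space_in_gen_sigma space_in_gen_sigma, of "{1..1}" "{1+g..}"]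
  by linarith

lemma abs_prob_Int_diff_le_phi_mix:
  assumes "1 \<le> k" "A \<in> gen_sigma M X {1..k}" "B \<in> gen_sigma M X {k+g..}"
  shows "\<bar>prob (A \<inter> B) - prob A * prob B\<bar> \<le> prob A * phi_mix M X g"
proof (cases "prob A > 0")
  case True
  have "\<bar>prob (A \<inter> B) / prob A - prob B\<bar> \<le> phi_mix M X g"
    using abs_cond_prob_diff_le_phi_coef[OF gen_sigma_subset_events gen_sigma_subset_events assms(2,3) True]
      phi_coef_le_phi_mix[OF assms(1), of g] by linarith
  then have "prob A * \<bar>prob (A \<inter> B) / prob A - prob B\<bar> \<le> prob A * phi_mix M X g"
    using True by (intro mult_left_mono) auto
  also have "prob A * \<bar>prob (A \<inter> B) / prob A - prob B\<bar> = \<bar>prob (A \<inter> B) - prob A * prob B\<bar>"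
    using True by (simp add: abs_mult[symmetric] field_simps)
  finally show ?thesis .
next
  case False
  then have "prob A = 0" using measure_nonneg[of M A] by linarith
  moreover have "prob (A \<inter> B) \<le> prob A"
    using assms gen_sigma_subset_events by (intro finite_measure_mono) auto
  ultimately show ?thesis by simp
qed

lemma sum_prob_Int_le_phi_mix:
  fixes Z :: "'a \<Rightarrow> real"
  assumes k: "1 \<le> k" and A: "A \<in> gen_sigma M X {1..k}"
    and Z: "simple_function (gen_measure {k+g..}) Z"
    and Z_bounds: "\<And>\<omega>. \<omega> \<in> space M \<Longrightarrow> 0 \<le> Z \<omega> \<and> Z \<omega> \<le> K"
  shows "(\<Sum>z\<in>Z ` space M. z * prob (A \<inter> (Z -` {z} \<inter> space M)))
    \<le> prob A * ((\<Sum>z\<in>Z ` space M. z * prob (Z -` {z} \<inter> space M)) + K * phi_mix M X g)"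
proof -
  \<comment> \<open>Only the values \<open>z\<close> with \<open>D z > 0\<close> contribute positively, and they form a single
    future event, to which the mixing bound applies.\<close>
  define B where "B T = Z -` T \<inter> space M" for T
  define D where "D z = prob (A \<inter> B {z}) - prob A * prob (B {z})" for z
  define S where "S = {z \<in> Z ` space M. D z > 0}"
  have B_gen: "B T \<in> gen_sigma M X {k+g..}" for T
    using simple_functionD(2)[OF Z] by (simp add: B_def)
  have events: "A \<in> events" "B T \<in> events" for T
    using A B_gen gen_sigma_subset_events by auto
  have fin: "finite (Z ` space M)" and S_sub: "S \<subseteq> Z ` space M"
    using simple_functionD(1)[OF Z] by (auto simp: S_def)
  have "0 \<le> K" using Z_bounds not_empty by force
  have "(\<Sum>z\<in>Z ` space M. z * D z) = (\<Sum>z\<in>S. z * D z) + (\<Sum>z\<in>Z ` space M - S. z * D z)"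
    using sum.subset_diff[OF S_sub fin] by (simp add: add.commute)
  also have "(\<Sum>z\<in>Z ` space M - S. z * D z) \<le> 0"
    using Z_bounds by (intro sum_nonpos) (auto simp: S_def intro!: mult_nonneg_nonpos)
  also have "(\<Sum>z\<in>S. z * D z) \<le> (\<Sum>z\<in>S. K * D z)"
    using Z_bounds by (intro sum_mono mult_right_mono) (auto simp: S_def)
  also have "(\<Sum>z\<in>S. K * D z) = K * (prob (A \<inter> B S) - prob A * prob (B S))"
  proof -
    have "disjoint_family_on (\<lambda>z. B {z}) S" "disjoint_family_on (\<lambda>z. A \<inter> B {z}) S"
      by (auto simp: disjoint_family_on_def B_def)
    then have "prob (\<Union>z\<in>S. B {z}) = (\<Sum>z\<in>S. prob (B {z}))"
      "prob (\<Union>z\<in>S. A \<inter> B {z}) = (\<Sum>z\<in>S. prob (A \<inter> B {z}))"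
      using finite_subset[OF S_sub fin] events by (intro finite_measure_finite_Union; auto)+
    moreover have "B S = (\<Union>z\<in>S. B {z})" "A \<inter> B S = (\<Union>z\<in>S. A \<inter> B {z})"
      by (auto simp: B_def)
    ultimately have "prob (B S) = (\<Sum>z\<in>S. prob (B {z}))" "prob (A \<inter> B S) = (\<Sum>z\<in>S. prob (A \<inter> B {z}))"
      by (simp_all only:)
    then show ?thesis by (simp add: D_def right_diff_distrib sum_subtractf sum_distrib_left)
  qed
  also have "\<dots> \<le> K * (prob A * phi_mix M X g)"
    using abs_prob_Int_diff_le_phi_mix[OF k A B_gen, of S] \<open>0 \<le> K\<close> by (intro mult_left_mono) auto
  finally have "(\<Sum>z\<in>Z ` space M. z * D z) \<le> K * (prob A * phi_mix M X g)" by simp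
  moreover have "(\<Sum>z\<in>Z ` space M. z * D z)
      = (\<Sum>z\<in>Z ` space M. z * prob (A \<inter> B {z})) - prob A * (\<Sum>z\<in>Z ` space M. z * prob (B {z}))"
    by (simp add: D_def right_diff_distrib sum_subtractf sum_distrib_left mult.left_commute)
  ultimately show ?thesis by (simp add: B_def algebra_simps)
qed

lemma integral_mult_le_phi_mix:
  fixes Y Z :: "'a \<Rightarrow> real"
  assumes k: "1 \<le> k"
    and Y: "simple_function (gen_measure {1..k}) Y" and Z: "simple_function (gen_measure {k+g..}) Z"
    and Y_nonneg: "\<And>\<omega>. \<omega> \<in> space M \<Longrightarrow> 0 \<le> Y \<omega>"
    and Z_bounds: "\<And>\<omega>. \<omega> \<in> space M \<Longrightarrow> 0 \<le> Z \<omega> \<and> Z \<omega> \<le> K"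
  shows "(\<integral>\<omega>. Y \<omega> * Z \<omega> \<partial>M) \<le> (\<integral>\<omega>. Y \<omega> \<partial>M) * ((\<integral>\<omega>. Z \<omega> \<partial>M) + K * phi_mix M X g)"
proof -
  let ?A = "\<lambda>y. Y -` {y} \<inter> space M" and ?B = "\<lambda>z. Z -` {z} \<inter> space M"
  have YM: "simple_function M Y" and ZM: "simple_function M Z"
    using Y Z by (auto intro: simple_function_gen_measure)
  have A_gen: "?A y \<in> gen_sigma M X {1..k}" for y
    using simple_functionD(2)[OF Y] by simp
  have events: "?A y \<inter> ?B z \<in> events" for y z
    using simple_functionD(2)[OF YM] simple_functionD(2)[OF ZM] by auto
  have pointwise: "Y \<omega> * Z \<omega> = (\<Sum>y\<in>Y ` space M. \<Sum>z\<in>Z ` space M. y * z * indicator (?A y \<inter> ?B z) \<omega>)"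
    if "\<omega> \<in> space M" for \<omega>
  proof -
    have "y * z * indicator (?A y \<inter> ?B z) \<omega> = (if z = Z \<omega> then if y = Y \<omega> then y * z else 0 else 0)" for y z
      using that by (auto simp: indicator_def)
    then show ?thesis
      using that simple_functionD(1)[OF YM] simple_functionD(1)[OF ZM] by (simp add: sum.delta)
  qed
  have "(\<integral>\<omega>. Y \<omega> * Z \<omega> \<partial>M)
      = (\<integral>\<omega>. (\<Sum>y\<in>Y ` space M. \<Sum>z\<in>Z ` space M. y * z * indicator (?A y \<inter> ?B z) \<omega>) \<partial>M)"
    using pointwise by (rule Bochner_Integration.integral_cong[OF refl])
  also have "\<dots> = (\<Sum>y\<in>Y ` space M. \<Sum>z\<in>Z ` space M. y * z * prob (?A y \<inter> ?B z))"
    using events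
    by (simp add: Bochner_Integration.integral_sum integrable_real_indicator emeasure_finite
        less_top[symmetric] Int_absorb2)
  also have "\<dots> = (\<Sum>y\<in>Y ` space M. y * (\<Sum>z\<in>Z ` space M. z * prob (?A y \<inter> ?B z)))"
    by (simp add: sum_distrib_left mult.assoc)
  also have "\<dots> \<le> (\<Sum>y\<in>Y ` space M. y * (prob (?A y) * ((\<Sum>z\<in>Z ` space M. z * prob (?B z)) + K * phi_mix M X g)))"
    using Y_nonneg by (intro sum_mono mult_left_mono sum_prob_Int_le_phi_mix[OF k A_gen Z Z_bounds]) auto
  also have "\<dots> = (\<integral>\<omega>. Y \<omega> \<partial>M) * ((\<integral>\<omega>. Z \<omega> \<partial>M) + K * phi_mix M X g)"
    by (simp add: integral_simple_function[OF YM] integral_simple_function[OF ZM] sum_distrib_right mult.assoc)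
  finally show ?thesis .
qed

lemma integral_prod_le_phi_mix:
  fixes Z :: "nat \<Rightarrow> 'a \<Rightarrow> real" and a b :: "nat \<Rightarrow> nat"
  assumes "1 \<le> a 0" and ab: "\<And>m. a m \<le> b m" and gap: "\<And>m. b m + g \<le> a (Suc m)"
    and Z: "\<And>m. simple_function (gen_measure {a m..b m}) (Z m)"
    and Z_bounds: "\<And>m \<omega>. \<omega> \<in> space M \<Longrightarrow> 0 \<le> Z m \<omega> \<and> Z m \<omega> \<le> K"
  shows "(\<integral>\<omega>. (\<Prod>m<L. Z m \<omega>) \<partial>M) \<le> (\<Prod>m<L. (\<integral>\<omega>. Z m \<omega> \<partial>M) + K * phi_mix M X g)"
proof (induction L)
  case 0
  then show ?case by (simp add: prob_space)
next
  case (Suc L)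
  have "0 \<le> K" using Z_bounds not_empty by force
  have factor_nonneg: "0 \<le> (\<integral>\<omega>. Z m \<omega> \<partial>M) + K * phi_mix M X g" for m
    using Z_bounds \<open>0 \<le> K\<close> phi_mix_nonneg by (intro add_nonneg_nonneg integral_nonneg) auto
  have "mono a" "mono b"
    unfolding mono_iff_le_Suc using ab gap by (meson add_leD1 order_trans)+
  show ?case
  proof (cases L)
    case 0
    then show ?thesis using \<open>0 \<le> K\<close> phi_mix_nonneg by simp
  next
    case (Suc L')
    have past: "simple_function (gen_measure {1..b L'}) (\<lambda>\<omega>. \<Prod>m<L. Z m \<omega>)"
    proof (intro simple_function_prod simple_function_gen_measure_mono[OF Z])
      fix m assume "m \<in> {..<L}"
      then show "{a m..b m} \<subseteq> {1..b L'}"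
        using \<open>1 \<le> a 0\<close> monoD[OF \<open>mono a\<close>, of 0 m] monoD[OF \<open>mono b\<close>, of m L'] Suc by auto
    qed
    have future: "simple_function (gen_measure {b L' + g..}) (Z L)"
      using gap[of L'] Suc by (intro simple_function_gen_measure_mono[OF Z]) auto
    have "1 \<le> b L'" using \<open>1 \<le> a 0\<close> ab[of 0] monoD[OF \<open>mono b\<close>, of 0 L'] by simp
    have "(\<integral>\<omega>. (\<Prod>m<Suc L. Z m \<omega>) \<partial>M) = (\<integral>\<omega>. (\<Prod>m<L. Z m \<omega>) * Z L \<omega> \<partial>M)"
      by simp
    also have "\<dots> \<le> (\<integral>\<omega>. (\<Prod>m<L. Z m \<omega>) \<partial>M) * ((\<integral>\<omega>. Z L \<omega> \<partial>M) + K * phi_mix M X g)"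
      using Z_bounds by (intro integral_mult_le_phi_mix[OF \<open>1 \<le> b L'\<close> past future]) (auto intro: prod_nonneg)
    also have "\<dots> \<le> (\<Prod>m<L. (\<integral>\<omega>. Z m \<omega> \<partial>M) + K * phi_mix M X g) * ((\<integral>\<omega>. Z L \<omega> \<partial>M) + K * phi_mix M X g)"
      by (intro mult_right_mono Suc.IH factor_nonneg)
    finally show ?thesis by simp
  qed
qed

end

section \<open>Blocks and centred partial sums\<close>

definition block :: "nat \<Rightarrow> nat \<Rightarrow> nat \<Rightarrow> nat set" where
  "block n q j = {i \<in> {1..n}. (i - 1) div q = j}"

text \<open>The union of the blocks whose index has parity \<open>r\<close>; two such blocks are at least
  \<open>q + 1\<close> indices apart.\<close>

definition alt_blocks :: "nat \<Rightarrow> nat \<Rightarrow> nat \<Rightarrow> nat set" where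
  "alt_blocks n q r = {i \<in> {1..n}. (i - 1) div q mod 2 = r}"

lemma block_subset: "1 \<le> q \<Longrightarrow> block n q j \<subseteq> {j * q + 1 .. j * q + q}"
proof
  fix i assume "1 \<le> q" "i \<in> block n q j"
  then have "(i - 1) div q = j" "1 \<le> i" by (auto simp: block_def)
  moreover have "(i - 1) div q * q \<le> i - 1" "i - 1 < (i - 1) div q * q + q"
    using \<open>1 \<le> q\<close> div_mult_mod_eq[of "i - 1" q] mod_less_divisor[of q "i - 1"] by linarith+
  ultimately show "i \<in> {j * q + 1 .. j * q + q}" by (auto simp del: div_times_less_eq_dividend)
qed

lemma card_block_le: "1 \<le> q \<Longrightarrow> card (block n q j) \<le> q"
  using card_mono[OF _ block_subset] by fastforce

lemma sum_card_blocks_le: "(\<Sum>m<L. card (block n q (2 * m + r))) \<le> n"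
proof -
  have "(\<Sum>m<L. card (block n q (2 * m + r))) = card (\<Union>m<L. block n q (2 * m + r))"
    by (rule card_UN_disjoint[symmetric]) (auto simp: block_def)
  also have "\<dots> \<le> card {1..n}" by (intro card_mono) (auto simp: block_def)
  finally show ?thesis by simp
qed

lemma alt_blocks_eq_UN:
  assumes "r \<le> 1" "n div q < L"
  shows "alt_blocks n q r = (\<Union>m<L. block n q (2 * m + r))"
proof -
  have "(i - 1) div q div 2 < L" if "i \<le> n" for i
    using div_le_mono[OF diff_le_self[of i 1], of q] div_le_mono[OF that, of q] assms(2) by linarith
  moreover have "d mod 2 = r \<Longrightarrow> d = 2 * (d div 2) + r" "(2 * m + r) mod 2 = r" for d m :: nat
    using assms(1) by presburger+
  ultimately show ?thesis
    unfolding alt_blocks_def block_def by auto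
qed

locale summably_phi_mixing = random_sequence +
  fixes F :: "real \<Rightarrow> real"
  assumes marginal: "\<And>i x. 1 \<le> i \<Longrightarrow> prob {\<omega> \<in> space M. X i \<omega> \<le> x} = F x"
    and decseq_phi_mix: "decseq (phi_mix M X)"
    and summable_sqrt_phi_mix: "summable (\<lambda>n. sqrt (phi_mix M X (Suc n)))"
begin

lemma F_eq_cdf: "F x = cdf (distr M borel (X 1)) x"
  using marginal[of 1 x] by (simp add: cdf_def measure_distr vimage_def Int_def conj_commute)

lemma mono_F: "mono F"
  using finite_borel_measure.cdf_nondecreasing[of "distr M borel (X 1)"]
  by (auto intro!: monoI simp: F_eq_cdf real_distribution.finite_borel_measure_M)

lemma F_tendsto_at_top: "(F \<longlongrightarrow> 1) at_top"
  unfolding F_eq_cdf[abs_def] by (simp add: real_distribution.cdf_lim_at_top_prob)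

lemma F_tendsto_at_bot: "(F \<longlongrightarrow> 0) at_bot"
  unfolding F_eq_cdf[abs_def]
  by (simp add: finite_borel_measure.cdf_lim_at_bot real_distribution.finite_borel_measure_M)

lemma F_bounds: "0 \<le> F x" "F x \<le> 1"
  using marginal[of 1 x] measure_nonneg[of M "{\<omega> \<in> space M. X 1 \<omega> \<le> x}"]
    prob_le_1[of "{\<omega> \<in> space M. X 1 \<omega> \<le> x}"] by linarith+

definition centred_ind :: "real \<Rightarrow> nat \<Rightarrow> 'a \<Rightarrow> real" where
  "centred_ind x i \<omega> = (if X i \<omega> \<le> x then 1 else 0) - F x"

definition centred_sum :: "real \<Rightarrow> nat set \<Rightarrow> 'a \<Rightarrow> real" where
  "centred_sum x B \<omega> = (\<Sum>i\<in>B. centred_ind x i \<omega>)"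

lemma abs_centred_ind_le_1: "\<bar>centred_ind x i \<omega>\<bar> \<le> 1"
  using F_bounds[of x] by (simp add: centred_ind_def)

lemma abs_centred_sum_le: "\<bar>centred_sum x B \<omega>\<bar> \<le> card B"
proof -
  have "\<bar>centred_sum x B \<omega>\<bar> \<le> (\<Sum>i\<in>B. \<bar>centred_ind x i \<omega>\<bar>)"
    unfolding centred_sum_def by (rule sum_abs)
  also have "\<dots> \<le> (\<Sum>i\<in>B. 1)" by (intro sum_mono abs_centred_ind_le_1)
  finally show ?thesis by simp
qed

lemma abs_scaled_centred_sum_le:
  fixes t s :: real
  assumes "0 \<le> t" "\<bar>s\<bar> = 1"
  shows "\<bar>t * (s * centred_sum x B \<omega>)\<bar> \<le> t * card B"
  using mult_left_mono[OF abs_centred_sum_le assms(1)] assms by (simp add: abs_mult)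

lemma exp_scaled_centred_sum_le:
  fixes t s :: real
  assumes "0 \<le> t" "t * card B \<le> 1/4" "\<bar>s\<bar> = 1"
  shows "exp (t * (s * centred_sum x B \<omega>)) \<le> 3/2"
proof -
  have "t * (s * centred_sum x B \<omega>) \<le> 1/4"
    using abs_ge_self[of "t * (s * centred_sum x B \<omega>)"] abs_scaled_centred_sum_le[OF assms(1,3)] assms(2)
    by (meson order_trans)
  then have "exp (t * (s * centred_sum x B \<omega>)) \<le> exp (1/4)" by simp
  also have "exp (1/4 :: real) \<le> 3/2" using exp_bound_lemma[of "1/4 :: real"] by simp
  finally show ?thesis .
qed

lemma le_event_in_gen_sigma: "i \<in> I \<Longrightarrow> {\<omega> \<in> space M. X i \<omega> \<le> x} \<in> gen_sigma M X I"
  using measurable_sets[OF measurable_gen_measure, of i I "{..x}"] by (simp add: vimage_def Int_def conj_commute)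

lemma simple_function_centred_ind: "i \<in> I \<Longrightarrow> simple_function (gen_measure I) (centred_ind x i)"
proof (rule simple_function_borel_measurable)
  assume "i \<in> I"
  then show "centred_ind x i \<in> borel_measurable (gen_measure I)"
    unfolding centred_ind_def using measurable_gen_measure by measurable
  have "centred_ind x i ` space (gen_measure I) \<subseteq> {1 - F x, - F x}"
    by (auto simp: centred_ind_def)
  then show "finite (centred_ind x i ` space (gen_measure I))" by (rule finite_subset) simp
qed

lemma simple_function_centred_sum: "B \<subseteq> I \<Longrightarrow> simple_function (gen_measure I) (centred_sum x B)"
  unfolding centred_sum_def using simple_function_centred_ind by (intro simple_function_sum) auto

lemma simple_function_centred_ind_events: "simple_function M (centred_ind x i)"
  by (rule simple_function_gen_measure[OF simple_function_centred_ind[of i UNIV]]) simp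

lemma simple_function_centred_sum_events: "simple_function M (centred_sum x B)"
  by (rule simple_function_gen_measure[OF simple_function_centred_sum[of B UNIV]]) simp

lemma integral_centred_ind: "1 \<le> i \<Longrightarrow> (\<integral>\<omega>. centred_ind x i \<omega> \<partial>M) = 0"
proof -
  assume "1 \<le> i"
  let ?A = "{\<omega> \<in> space M. X i \<omega> \<le> x}"
  have "(\<integral>\<omega>. centred_ind x i \<omega> \<partial>M) = (\<integral>\<omega>. indicator ?A \<omega> - F x \<partial>M)"
    by (intro Bochner_Integration.integral_cong) (auto simp: centred_ind_def indicator_def)
  also have "\<dots> = prob ?A - F x"
    by (simp add: Bochner_Integration.integral_diff integrable_real_indicator emeasure_finite prob_space
        Int_absorb2 less_top[symmetric])
  finally show ?thesis using marginal[OF \<open>1 \<le> i\<close>] by simp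
qed

lemma abs_integral_centred_ind_mult_le_phi_mix:
  assumes "1 \<le> i" "i < j"
  shows "\<bar>\<integral>\<omega>. centred_ind x i \<omega> * centred_ind x j \<omega> \<partial>M\<bar> \<le> phi_mix M X (j - i)"
proof -
  let ?A = "{\<omega> \<in> space M. X i \<omega> \<le> x}" and ?B = "{\<omega> \<in> space M. X j \<omega> \<le> x}"
  have A: "?A \<in> gen_sigma M X {1..i}" and B: "?B \<in> gen_sigma M X {i + (j - i)..}"
    using assms by (auto intro: le_event_in_gen_sigma)
  have "(\<integral>\<omega>. centred_ind x i \<omega> * centred_ind x j \<omega> \<partial>M)
      = (\<integral>\<omega>. indicator (?A \<inter> ?B) \<omega> - F x * indicator ?A \<omega> - F x * indicator ?B \<omega> + (F x)\<^sup>2 \<partial>M)"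
    by (intro Bochner_Integration.integral_cong) (auto simp: centred_ind_def indicator_def power2_eq_square algebra_simps)
  also have "\<dots> = prob (?A \<inter> ?B) - F x * prob ?A - F x * prob ?B + (F x)\<^sup>2"
    by (simp add: Bochner_Integration.integral_diff Bochner_Integration.integral_add integrable_real_indicator
        emeasure_finite prob_space less_top[symmetric] Int_absorb2 Collect_conj_eq[symmetric])
  also have "\<dots> = prob (?A \<inter> ?B) - prob ?A * prob ?B"
    using marginal[of i x] marginal[of j x] assms by (simp add: power2_eq_square)
  finally have "\<bar>\<integral>\<omega>. centred_ind x i \<omega> * centred_ind x j \<omega> \<partial>M\<bar> \<le> prob ?A * phi_mix M X (j - i)"
    using abs_prob_Int_diff_le_phi_mix[OF assms(1) A B] by simp
  also have "\<dots> \<le> phi_mix M X (j - i)"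
    using phi_mix_nonneg by (intro mult_left_le_one_le) auto
  finally show ?thesis .
qed

lemma abs_integral_centred_ind_mult_le:
  assumes "1 \<le> i" "1 \<le> j"
  shows "\<bar>\<integral>\<omega>. centred_ind x i \<omega> * centred_ind x j \<omega> \<partial>M\<bar>
    \<le> (if i = j then 1 else phi_mix M X (max i j - min i j))"
proof (cases i j rule: linorder_cases)
  case equal
  have "simple_function M (\<lambda>\<omega>. centred_ind x i \<omega> * centred_ind x j \<omega>)"
    by (intro simple_function_mult simple_function_centred_ind_events)
  then have "\<bar>\<integral>\<omega>. centred_ind x i \<omega> * centred_ind x j \<omega> \<partial>M\<bar> \<le> (\<integral>\<omega>. 1 \<partial>M)"
    using abs_centred_ind_le_1
    by (intro integral_abs_bound[THEN order_trans] integral_mono integrable_simple_function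
        simple_function_compose1[where g=abs]) (auto simp: abs_mult intro: mult_le_one)
  then show ?thesis using equal by (simp add: prob_space)
next
  case less
  then show ?thesis using abs_integral_centred_ind_mult_le_phi_mix[OF assms(1) less] by simp
next
  case greater
  then show ?thesis using abs_integral_centred_ind_mult_le_phi_mix[OF assms(2) greater]
    by (simp add: mult.commute)
qed

section \<open>Exponential bounds for centred partial sums\<close>

definition cov_sum :: real where
  "cov_sum = 1 + 2 * (\<Sum>k. phi_mix M X (Suc k))"

lemma phi_mix_le_sqrt: "phi_mix M X k \<le> sqrt (phi_mix M X k)"
proof -
  have "phi_mix M X k = sqrt (phi_mix M X k) * sqrt (phi_mix M X k)"
    using phi_mix_nonneg[of k] by simp
  also have "\<dots> \<le> sqrt (phi_mix M X k) * 1"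
    using phi_mix_nonneg[of k] phi_mix_le_1[of k] by (intro mult_left_mono) auto
  finally show ?thesis by simp
qed

lemma summable_phi_mix: "summable (\<lambda>k. phi_mix M X (Suc k))"
  by (rule summable_comparison_test[OF _ summable_sqrt_phi_mix]) (use phi_mix_nonneg phi_mix_le_sqrt in auto)

lemma cov_sum_ge_1: "1 \<le> cov_sum"
  unfolding cov_sum_def using suminf_nonneg[OF summable_phi_mix] phi_mix_nonneg by simp

lemma sum_phi_mix_reindex_le:
  assumes "finite C" "inj_on h C"
  shows "(\<Sum>j\<in>C. phi_mix M X (Suc (h j))) \<le> (\<Sum>k. phi_mix M X (Suc k))"
proof -
  have "(\<Sum>j\<in>C. phi_mix M X (Suc (h j))) = (\<Sum>k\<in>h ` C. phi_mix M X (Suc k))"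
    using sum.reindex[OF assms(2), of "\<lambda>k. phi_mix M X (Suc k)"] by simp
  also have "\<dots> \<le> (\<Sum>k. phi_mix M X (Suc k))"
    using assms phi_mix_nonneg by (intro sum_le_suminf summable_phi_mix) auto
  finally show ?thesis .
qed

lemma sum_cov_bound_le:
  assumes "finite B"
  shows "(\<Sum>j\<in>B. if i = j then 1 else phi_mix M X (max i j - min i j)) \<le> cov_sum"
proof -
  define B1 where "B1 = {j \<in> B. j < i}"
  define B2 where "B2 = {j \<in> B. i < j}"
  have "(\<Sum>j\<in>B. if i = j then 1 else phi_mix M X (max i j - min i j))
      = (\<Sum>j\<in>B. (if j = i then 1 else 0) + (if j < i then phi_mix M X (i - j) else 0)
          + (if i < j then phi_mix M X (j - i) else 0))"
    by (intro sum.cong refl) auto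
  also have "\<dots> = (\<Sum>j\<in>B. if j = i then 1 else 0) + (\<Sum>j\<in>B1. phi_mix M X (i - j))
      + (\<Sum>j\<in>B2. phi_mix M X (j - i))"
    using assms by (simp add: sum.distrib sum.inter_filter B1_def B2_def)
  also have "(\<Sum>j\<in>B. if j = i then (1::real) else 0) \<le> 1"
    using assms by (simp add: sum.delta)
  also have "(\<Sum>j\<in>B1. phi_mix M X (i - j)) = (\<Sum>j\<in>B1. phi_mix M X (Suc (i - j - 1)))"
    by (intro sum.cong) (auto simp: B1_def Suc_diff_Suc)
  also have "\<dots> \<le> (\<Sum>k. phi_mix M X (Suc k))"
    using assms by (intro sum_phi_mix_reindex_le) (auto simp: B1_def inj_on_def)
  also have "(\<Sum>j\<in>B2. phi_mix M X (j - i)) = (\<Sum>j\<in>B2. phi_mix M X (Suc (j - i - 1)))"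
    by (intro sum.cong) (auto simp: B2_def Suc_diff_Suc)
  also have "\<dots> \<le> (\<Sum>k. phi_mix M X (Suc k))"
    using assms by (intro sum_phi_mix_reindex_le) (auto simp: B2_def inj_on_def)
  finally show ?thesis by (simp add: cov_sum_def)
qed

lemma integral_centred_sum_square_le:
  assumes "finite B" "B \<subseteq> {1..}"
  shows "(\<integral>\<omega>. (centred_sum x B \<omega>)\<^sup>2 \<partial>M) \<le> card B * cov_sum"
proof -
  have int: "integrable M (\<lambda>\<omega>. centred_ind x i \<omega> * centred_ind x j \<omega>)" for i j
    by (intro integrable_simple_function simple_function_mult simple_function_centred_ind_events)
  have "(\<integral>\<omega>. (centred_sum x B \<omega>)\<^sup>2 \<partial>M) = (\<integral>\<omega>. (\<Sum>i\<in>B. \<Sum>j\<in>B. centred_ind x i \<omega> * centred_ind x j \<omega>) \<partial>M)"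
    unfolding centred_sum_def power2_eq_square sum_product ..
  also have "\<dots> = (\<Sum>i\<in>B. \<Sum>j\<in>B. \<integral>\<omega>. centred_ind x i \<omega> * centred_ind x j \<omega> \<partial>M)"
    using int by (simp add: Bochner_Integration.integral_sum integrable_sum)
  also have "\<dots> \<le> (\<Sum>i\<in>B. \<Sum>j\<in>B. if i = j then 1 else phi_mix M X (max i j - min i j))"
  proof (intro sum_mono)
    fix i j assume "i \<in> B" "j \<in> B"
    then show "(\<integral>\<omega>. centred_ind x i \<omega> * centred_ind x j \<omega> \<partial>M)
        \<le> (if i = j then 1 else phi_mix M X (max i j - min i j))"
      using assms(2) by (intro abs_le_D1[OF abs_integral_centred_ind_mult_le]) auto
  qed
  also have "\<dots> \<le> (\<Sum>i\<in>B. cov_sum)"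
    by (intro sum_mono sum_cov_bound_le assms(1))
  finally show ?thesis by simp
qed

lemma integral_exp_centred_sum_le:
  fixes t s :: real
  assumes "finite B" "B \<subseteq> {1..}" "0 \<le> t" "t * card B \<le> 1/4" "\<bar>s\<bar> = 1"
  shows "(\<integral>\<omega>. exp (t * (s * centred_sum x B \<omega>)) \<partial>M) \<le> 1 + 3/4 * t\<^sup>2 * (card B * cov_sum)"
proof -
  let ?S = "centred_sum x B"
  have sf: "simple_function M ?S" by (rule simple_function_centred_sum_events)
  have int: "integrable M ?S" "integrable M (\<lambda>\<omega>. (?S \<omega>)\<^sup>2)" "integrable M (\<lambda>\<omega>. exp (t * (s * ?S \<omega>)))"
    by (intro integrable_simple_function simple_function_compose1[OF sf] sf)+
  have "s\<^sup>2 = 1" using \<open>\<bar>s\<bar> = 1\<close> power2_abs[of s] by simp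
  have "\<bar>t * (s * ?S \<omega>)\<bar> \<le> 1/4" for \<omega>
    using abs_scaled_centred_sum_le[OF assms(3,5)] assms(4) by (rule order_trans)
  then have "exp (t * (s * ?S \<omega>)) \<le> 1 + t * s * ?S \<omega> + 3/4 * t\<^sup>2 * (?S \<omega>)\<^sup>2" for \<omega>
    using exp_le_1_plus_quadratic[of "t * (s * ?S \<omega>)"] \<open>s\<^sup>2 = 1\<close>
    by (simp add: power_mult_distrib mult.assoc)
  then have "(\<integral>\<omega>. exp (t * (s * ?S \<omega>)) \<partial>M) \<le> (\<integral>\<omega>. 1 + t * s * ?S \<omega> + 3/4 * t\<^sup>2 * (?S \<omega>)\<^sup>2 \<partial>M)"
    using int by (intro integral_mono Bochner_Integration.integrable_add integrable_mult_right) auto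
  also have "\<dots> = 1 + t * s * (\<integral>\<omega>. ?S \<omega> \<partial>M) + 3/4 * t\<^sup>2 * (\<integral>\<omega>. (?S \<omega>)\<^sup>2 \<partial>M)"
    using int by (simp add: prob_space)
  also have "(\<integral>\<omega>. ?S \<omega> \<partial>M) = 0"
  proof -
    have "integrable M (centred_ind x i)" for i
      by (intro integrable_simple_function simple_function_centred_ind_events)
    then have "(\<integral>\<omega>. ?S \<omega> \<partial>M) = (\<Sum>i\<in>B. \<integral>\<omega>. centred_ind x i \<omega> \<partial>M)"
      by (simp add: centred_sum_def Bochner_Integration.integral_sum)
    also have "\<dots> = 0"
      using assms(2) by (intro sum.neutral) (auto simp: integral_centred_ind)
    finally show ?thesis .
  qed
  also have "3/4 * t\<^sup>2 * (\<integral>\<omega>. (?S \<omega>)\<^sup>2 \<partial>M) \<le> 3/4 * t\<^sup>2 * (card B * cov_sum)"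
    by (intro mult_left_mono integral_centred_sum_square_le assms(1,2)) auto
  finally show ?thesis by simp
qed

lemma centred_sum_alt_blocks_eq_sum_blocks:
  assumes "r \<le> 1" "n div q < L"
  shows "centred_sum x (alt_blocks n q r) \<omega> = (\<Sum>m<L. centred_sum x (block n q (2 * m + r)) \<omega>)"
  unfolding alt_blocks_eq_UN[OF assms] centred_sum_def
  by (rule sum.UNION_disjoint) (auto simp: block_def)

lemma integral_exp_alt_blocks_le:
  fixes t s :: real
  assumes q: "1 \<le> q" and r: "r \<le> 1" and t: "0 \<le> t" "t * q \<le> 1/4" and s: "\<bar>s\<bar> = 1"
  shows "(\<integral>\<omega>. exp (t * (s * centred_sum x (alt_blocks n q r) \<omega>)) \<partial>M)
    \<le> exp (3/4 * t\<^sup>2 * cov_sum * n + real (n div q + 1) * (3/2 * phi_mix M X (q + 1)))"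
proof -
  define L where "L = n div q + 1"
  then have "n div q < L" by simp
  define Z where "Z m \<omega> = exp (t * (s * centred_sum x (block n q (2 * m + r)) \<omega>))" for m \<omega>
  define a where "a m = 3/4 * t\<^sup>2 * (card (block n q (2 * m + r)) * cov_sum) + 3/2 * phi_mix M X (q + 1)" for m
  have "t * card (block n q (2 * m + r)) \<le> t * q" for m
    using card_block_le[OF q] t by (intro mult_left_mono) auto
  then have t_card: "t * card (block n q (2 * m + r)) \<le> 1/4" for m
    using t by (meson order_trans)
  have Z_bounds: "0 \<le> Z m \<omega> \<and> Z m \<omega> \<le> 3/2" for m \<omega>
    unfolding Z_def using exp_scaled_centred_sum_le[OF t(1) t_card s] by simp
  have Z_sf: "simple_function (gen_measure {(2 * m + r) * q + 1 .. (2 * m + r) * q + q}) (Z m)" for m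
    unfolding Z_def using block_subset[OF q]
    by (intro simple_function_compose1[where g="\<lambda>v. exp (t * (s * v))"] simple_function_centred_sum) simp
  have "(\<integral>\<omega>. exp (t * (s * centred_sum x (alt_blocks n q r) \<omega>)) \<partial>M) = (\<integral>\<omega>. (\<Prod>m<L. Z m \<omega>) \<partial>M)"
    using centred_sum_alt_blocks_eq_sum_blocks[OF r \<open>n div q < L\<close>]
    by (simp add: Z_def sum_distrib_left exp_sum)
  also have "\<dots> \<le> (\<Prod>m<L. (\<integral>\<omega>. Z m \<omega> \<partial>M) + 3/2 * phi_mix M X (q + 1))"
    using q Z_bounds by (intro integral_prod_le_phi_mix[OF _ _ _ Z_sf]) (auto simp: algebra_simps)
  also have "\<dots> \<le> (\<Prod>m<L. 1 + a m)"
  proof (intro prod_mono conjI)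
    fix m
    have "(\<integral>\<omega>. Z m \<omega> \<partial>M) \<le> 1 + 3/4 * t\<^sup>2 * (card (block n q (2 * m + r)) * cov_sum)"
      unfolding Z_def by (rule integral_exp_centred_sum_le[OF _ _ t(1) t_card s]) (auto simp: block_def)
    then show "(\<integral>\<omega>. Z m \<omega> \<partial>M) + 3/2 * phi_mix M X (q + 1) \<le> 1 + a m"
      by (simp add: a_def)
    show "0 \<le> (\<integral>\<omega>. Z m \<omega> \<partial>M) + 3/2 * phi_mix M X (q + 1)"
      using Z_bounds phi_mix_nonneg by (intro add_nonneg_nonneg integral_nonneg) auto
  qed
  also have "\<dots> \<le> exp (\<Sum>m<L. a m)"
    using cov_sum_ge_1 phi_mix_nonneg by (intro prod_one_plus_le_exp_sum) (simp add: a_def)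
  also have "(\<Sum>m<L. a m) = 3/4 * t\<^sup>2 * cov_sum * (\<Sum>m<L. real (card (block n q (2 * m + r))))
      + L * (3/2 * phi_mix M X (q + 1))"
    by (simp add: a_def sum.distrib sum_distrib_left mult_ac)
  also have "\<dots> \<le> 3/4 * t\<^sup>2 * cov_sum * n + L * (3/2 * phi_mix M X (q + 1))"
    using sum_card_blocks_le[of n q r L] cov_sum_ge_1
    by (intro add_right_mono mult_left_mono) (auto simp flip: of_nat_sum)
  finally show ?thesis by (simp add: L_def)
qed

lemma prob_alt_blocks_ge_le:
  fixes t s :: real
  assumes q: "1 \<le> q" and r: "r \<le> 1" and t: "0 < t" "t * q \<le> 1/4" and s: "\<bar>s\<bar> = 1"
  shows "prob {\<omega> \<in> space M. a \<le> s * centred_sum x (alt_blocks n q r) \<omega>}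
    \<le> exp (- t * a + 3/4 * t\<^sup>2 * cov_sum * n + real (n div q + 1) * (3/2 * phi_mix M X (q + 1)))"
proof -
  let ?f = "\<lambda>\<omega>. s * centred_sum x (alt_blocks n q r) \<omega>"
  have int: "integrable M (\<lambda>\<omega>. exp (t * ?f \<omega>))"
    by (intro integrable_simple_function simple_function_compose1[where g="\<lambda>v. exp (t * (s * v))"]
        simple_function_centred_sum_events)
  have "set_integrable M (space M) (\<lambda>\<omega>. exp (t * ?f \<omega>))"
    unfolding set_integrable_def by (rule integrable_mult_indicator[OF sets.top int])
  then have "prob {\<omega> \<in> space M. a \<le> ?f \<omega>} \<le> exp (- t * a) * (\<integral>\<omega>\<in>space M. exp (t * ?f \<omega>) \<partial>M)"
    by (intro Chernoff_ineq_ge[OF t(1)]) auto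
  also have "\<dots> = exp (- t * a) * (\<integral>\<omega>. exp (t * ?f \<omega>) \<partial>M)"
    using set_integral_space[OF int] by simp
  also have "\<dots> \<le> exp (- t * a) * exp (3/4 * t\<^sup>2 * cov_sum * n + real (n div q + 1) * (3/2 * phi_mix M X (q + 1)))"
    using integral_exp_alt_blocks_le[OF q r _ t(2) s] t(1) by (intro mult_left_mono) auto
  finally show ?thesis by (simp only: exp_add mult.assoc)
qed

lemma centred_sum_eq_alt_blocks_add:
  "centred_sum x {1..n} \<omega> = centred_sum x (alt_blocks n q 0) \<omega> + centred_sum x (alt_blocks n q 1) \<omega>"
proof -
  have "centred_sum x (alt_blocks n q 0) \<omega> + centred_sum x (alt_blocks n q 1) \<omega>
      = centred_sum x (alt_blocks n q 0 \<union> alt_blocks n q 1) \<omega>"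
    unfolding centred_sum_def by (rule sum.union_disjoint[symmetric]) (auto simp: alt_blocks_def)
  moreover have "alt_blocks n q 0 \<union> alt_blocks n q 1 = {1..n}"
    by (auto simp: alt_blocks_def)
  ultimately show ?thesis by simp
qed

lemma prob_abs_centred_sum_ge_le:
  fixes t :: real
  assumes q: "1 \<le> q" and t: "0 < t" "t * q \<le> 1/4"
  shows "prob {\<omega> \<in> space M. 2 * a \<le> \<bar>centred_sum x {1..n} \<omega>\<bar>}
    \<le> 4 * exp (- t * a + 3/4 * t\<^sup>2 * cov_sum * n + real (n div q + 1) * (3/2 * phi_mix M X (q + 1)))"
proof -
  let ?bound = "exp (- t * a + 3/4 * t\<^sup>2 * cov_sum * n + real (n div q + 1) * (3/2 * phi_mix M X (q + 1)))"
  define E where "E r s = {\<omega> \<in> space M. a \<le> s * centred_sum x (alt_blocks n q r) \<omega>}" for r s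
  have E_prob: "prob (E r s) \<le> ?bound" if "r \<le> 1" "\<bar>s\<bar> = 1" for r s
    unfolding E_def by (rule prob_alt_blocks_ge_le[OF q that(1) t that(2)])
  have E_events: "E r s \<in> events" for r s
    unfolding E_def using borel_measurable_simple_function[OF simple_function_centred_sum_events] by measurable
  have "{\<omega> \<in> space M. 2 * a \<le> \<bar>centred_sum x {1..n} \<omega>\<bar>} \<subseteq> (E 0 1 \<union> E 0 (-1)) \<union> (E 1 1 \<union> E 1 (-1))"
  proof
    fix \<omega> assume "\<omega> \<in> {\<omega> \<in> space M. 2 * a \<le> \<bar>centred_sum x {1..n} \<omega>\<bar>}"
    then have "\<omega> \<in> space M" "2 * a \<le> \<bar>centred_sum x (alt_blocks n q 0) \<omega> + centred_sum x (alt_blocks n q 1) \<omega>\<bar>"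
      using centred_sum_eq_alt_blocks_add[of x n \<omega> q] by auto
    moreover from this(2) have "a \<le> centred_sum x (alt_blocks n q 0) \<omega> \<or> a \<le> - centred_sum x (alt_blocks n q 0) \<omega>
        \<or> a \<le> centred_sum x (alt_blocks n q 1) \<omega> \<or> a \<le> - centred_sum x (alt_blocks n q 1) \<omega>"
      by arith
    ultimately show "\<omega> \<in> (E 0 1 \<union> E 0 (-1)) \<union> (E 1 1 \<union> E 1 (-1))"
      unfolding E_def by auto
  qed
  then have "prob {\<omega> \<in> space M. 2 * a \<le> \<bar>centred_sum x {1..n} \<omega>\<bar>} \<le> prob ((E 0 1 \<union> E 0 (-1)) \<union> (E 1 1 \<union> E 1 (-1)))"
    using E_events by (intro finite_measure_mono) auto
  also have "\<dots> \<le> (prob (E 0 1) + prob (E 0 (-1))) + (prob (E 1 1) + prob (E 1 (-1)))"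
    using E_events by (intro measure_Un_le[THEN order_trans] add_mono measure_Un_le) auto
  also have "\<dots> \<le> (?bound + ?bound) + (?bound + ?bound)"
    by (intro add_mono E_prob) auto
  finally show ?thesis by simp
qed

definition sqrt_phi_sum :: real where
  "sqrt_phi_sum = (\<Sum>n. sqrt (phi_mix M X (Suc n)))"

lemma sqrt_phi_sum_nonneg: "0 \<le> sqrt_phi_sum"
  unfolding sqrt_phi_sum_def by (rule suminf_nonneg[OF summable_sqrt_phi_mix]) (simp add: phi_mix_nonneg)

lemma cov_sum_le: "cov_sum \<le> 1 + 2 * sqrt_phi_sum"
  unfolding cov_sum_def sqrt_phi_sum_def
  using suminf_le[OF _ summable_phi_mix summable_sqrt_phi_mix] phi_mix_le_sqrt by simp

lemma phi_mix_le_sqrt_phi_sum: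
  assumes "1 \<le> k"
  shows "phi_mix M X k \<le> sqrt_phi_sum\<^sup>2 / (real k)\<^sup>2"
proof -
  have "real k * sqrt (phi_mix M X k) = (\<Sum>j<k. sqrt (phi_mix M X k))" by simp
  also have "\<dots> \<le> (\<Sum>j<k. sqrt (phi_mix M X (Suc j)))"
    using decseq_phi_mix by (intro sum_mono) (simp add: decseq_def)
  also have "\<dots> \<le> sqrt_phi_sum"
    unfolding sqrt_phi_sum_def using phi_mix_nonneg by (intro sum_le_suminf summable_sqrt_phi_mix) auto
  finally have "sqrt (phi_mix M X k) \<le> sqrt_phi_sum / real k"
    using assms by (simp add: field_simps)
  then have "(sqrt (phi_mix M X k))\<^sup>2 \<le> (sqrt_phi_sum / real k)\<^sup>2"
    using phi_mix_nonneg[of k] by (intro power_mono) auto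
  moreover have "phi_mix M X k = (sqrt (phi_mix M X k))\<^sup>2"
    using phi_mix_nonneg[of k] by simp
  ultimately show ?thesis by (simp add: power_divide)
qed

lemma blocks_phi_mix_term_le:
  assumes q: "1 \<le> q" "real n \<le> real q ^ 3"
  shows "real (n div q + 1) * (3/2 * phi_mix M X (q + 1)) \<le> 3 * sqrt_phi_sum\<^sup>2"
proof -
  have "phi_mix M X (q + 1) \<le> sqrt_phi_sum\<^sup>2 / (real (q + 1))\<^sup>2"
    by (rule phi_mix_le_sqrt_phi_sum) simp
  also have "\<dots> \<le> sqrt_phi_sum\<^sup>2 / (real q)\<^sup>2"
    using q by (intro divide_left_mono power_mono mult_pos_pos) auto
  finally have "phi_mix M X (q + 1) \<le> sqrt_phi_sum\<^sup>2 / (real q)\<^sup>2" .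
  moreover have "real (n div q + 1) \<le> real n / real q + 1"
    using of_nat_div_le_of_nat[of n q] by simp
  ultimately have "real (n div q + 1) * (3/2 * phi_mix M X (q + 1))
      \<le> (real n / real q + 1) * (3/2 * (sqrt_phi_sum\<^sup>2 / (real q)\<^sup>2))"
    using phi_mix_nonneg by (intro mult_mono) auto
  also have "\<dots> = 3/2 * sqrt_phi_sum\<^sup>2 * (real n / real q ^ 3 + 1 / (real q)\<^sup>2)"
    using q by (simp add: field_simps power2_eq_square power3_eq_cube)
  also have "\<dots> \<le> 3/2 * sqrt_phi_sum\<^sup>2 * (1 + 1)"
    using q by (intro mult_left_mono add_mono) (auto simp: field_simps)
  finally show ?thesis by simp
qed

lemma prob_abs_centred_sum_ge_le_powr:
  fixes c \<eta> :: real
  assumes n: "2 \<le> n" and q: "1 \<le> q" "real n \<le> real q ^ 3"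
    and \<eta>: "0 < \<eta>" "\<eta>\<^sup>2 = c * ln n / n" "\<eta> * q \<le> 3/2" and c: "64 * cov_sum \<le> c"
  shows "prob {\<omega> \<in> space M. n * \<eta> / 2 \<le> \<bar>centred_sum x {1..n} \<omega>\<bar>}
    \<le> 4 * exp (3 * sqrt_phi_sum\<^sup>2) * n powr (-4/3)"
proof -
  \<comment> \<open>This choice of \<open>t\<close> turns the Chernoff exponent into \<open>-n \<eta>\<^sup>2 / (48 cov_sum) \<le> -4/3 ln n\<close>.\<close>
  define t where "t = \<eta> / (6 * cov_sum)"
  define a where "a = n * \<eta> / 4"
  have V: "1 \<le> cov_sum" by (rule cov_sum_ge_1)
  have "0 < t" using \<eta> V by (simp add: t_def)
  have "t * q \<le> 1/4"
  proof -
    have "t * q = (\<eta> * q) / (6 * cov_sum)" by (simp add: t_def)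
    also have "\<dots> \<le> (3/2) / (6 * cov_sum)" using \<eta> V by (intro divide_right_mono) auto
    also have "\<dots> \<le> 1/4" using V by (simp add: field_simps)
    finally show ?thesis .
  qed
  have "- t * a + 3/4 * t\<^sup>2 * cov_sum * n = - (n * \<eta>\<^sup>2) / (48 * cov_sum)"
    using V by (simp add: t_def a_def field_simps power2_eq_square)
  also have "\<dots> = - (c * ln n) / (48 * cov_sum)" using \<eta> n by simp
  also have "\<dots> \<le> - (4/3) * ln n"
    using mult_right_mono[OF c, of "ln n"] n V by (simp add: field_simps)
  finally have main_term: "- t * a + 3/4 * t\<^sup>2 * cov_sum * n \<le> - (4/3) * ln n" .
  have mixing_term: "real (n div q + 1) * (3/2 * phi_mix M X (q + 1)) \<le> 3 * sqrt_phi_sum\<^sup>2"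
    by (rule blocks_phi_mix_term_le[OF q])
  have "prob {\<omega> \<in> space M. n * \<eta> / 2 \<le> \<bar>centred_sum x {1..n} \<omega>\<bar>}
      \<le> 4 * exp (- t * a + 3/4 * t\<^sup>2 * cov_sum * n + real (n div q + 1) * (3/2 * phi_mix M X (q + 1)))"
    using prob_abs_centred_sum_ge_le[OF q(1) \<open>0 < t\<close> \<open>t * q \<le> 1/4\<close>, of a x n] by (simp add: a_def mult.commute)
  also have "\<dots> \<le> 4 * exp (- (4/3) * ln n + 3 * sqrt_phi_sum\<^sup>2)"
    using add_mono[OF main_term mixing_term] by simp
  also have "\<dots> = 4 * exp (3 * sqrt_phi_sum\<^sup>2) * n powr (-4/3)"
    using n by (simp add: exp_add[symmetric] powr_def mult.commute)
  finally show ?thesis .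
qed

section \<open>Uniform deviation on the window\<close>

lemma emp_df_minus_F: "1 \<le> n \<Longrightarrow> emp_df X n \<omega> y - F y = centred_sum y {1..n} \<omega> / n"
  by (simp add: emp_df_def centred_sum_def centred_ind_def sum_subtractf field_simps)

lemma eventually_sum_prob_grid_le:
  assumes c: "64 * cov_sum \<le> c"
  shows "\<forall>\<^sub>F n in sequentially. (\<Sum>y\<in>window_grid c \<xi> n.
      prob {\<omega> \<in> space M. n * mesh c n / 2 \<le> \<bar>centred_sum y {1..n} \<omega>\<bar>})
    \<le> 4 * exp (3 * sqrt_phi_sum\<^sup>2) * real n powr (-5/4)"
proof -
  define C where "C = 4 * exp (3 * sqrt_phi_sum\<^sup>2)"
  have "0 < c" using c cov_sum_ge_1 by linarith
  show ?thesis
    using eventually_ge_at_top[of "2::nat"] eventually_mesh_block_length_le[OF less_imp_le[OF \<open>0 < c\<close>]]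
      eventually_grid_steps_le[OF \<open>0 < c\<close>]
  proof eventually_elim
    case (elim n)
    then have "2 \<le> n" "1 \<le> n" "mesh c n * block_length n \<le> 3/2" by auto
    have "prob {\<omega> \<in> space M. n * mesh c n / 2 \<le> \<bar>centred_sum y {1..n} \<omega>\<bar>} \<le> C * real n powr (-4/3)" for y
      unfolding C_def
      by (rule prob_abs_centred_sum_ge_le_powr[OF \<open>2 \<le> n\<close> block_length_pos[OF \<open>1 \<le> n\<close>]
            le_block_length_cube mesh_pos[OF \<open>0 < c\<close> \<open>2 \<le> n\<close>] mesh_squared[OF \<open>0 < c\<close> \<open>1 \<le> n\<close>]
            \<open>mesh c n * block_length n \<le> 3/2\<close> c])
    then have "(\<Sum>y\<in>window_grid c \<xi> n. prob {\<omega> \<in> space M. n * mesh c n / 2 \<le> \<bar>centred_sum y {1..n} \<omega>\<bar>})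
        \<le> card (window_grid c \<xi> n) * (C * real n powr (-4/3))"
      by (rule sum_bounded_above)
    also have "\<dots> \<le> real n powr (1/12) * (C * real n powr (-4/3))"
      using card_window_grid_le[of c \<xi> n] elim by (intro mult_right_mono) (auto simp: C_def)
    also have "\<dots> = C * real n powr (-5/4)"
      by (simp add: powr_add[symmetric])
    finally show ?case by (simp add: C_def)
  qed
qed

lemma AE_eventually_grid_deviation_le:
  assumes "64 * cov_sum \<le> c"
  shows "AE \<omega> in M. \<forall>\<^sub>F n in sequentially. \<forall>y \<in> window_grid c \<xi> n.
    \<bar>emp_df X n \<omega> y - F y\<bar> \<le> mesh c n / 2"
proof -
  define bad where "bad n y = {\<omega> \<in> space M. n * mesh c n / 2 \<le> \<bar>centred_sum y {1..n} \<omega>\<bar>}" for n y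
  have "AE \<omega> in M. \<forall>\<^sub>F n in sequentially. \<forall>y \<in> window_grid c \<xi> n. \<omega> \<notin> bad n y"
  proof (rule AE_eventually_avoid_finite_unions)
    show "bad n y \<in> events" for n y
      unfolding bad_def using borel_measurable_simple_function[OF simple_function_centred_sum_events]
      by measurable
    show "summable (\<lambda>n. 4 * exp (3 * sqrt_phi_sum\<^sup>2) * real n powr (-5/4))"
      by (intro summable_mult) (simp add: summable_real_powr_iff)
  qed (use eventually_sum_prob_grid_le[OF assms] in \<open>simp add: bad_def finite_window_grid\<close>)
  then show ?thesis
  proof (rule AE_mp, intro AE_I2 impI)
    fix \<omega> assume "\<omega> \<in> space M" and good: "\<forall>\<^sub>F n in sequentially. \<forall>y \<in> window_grid c \<xi> n. \<omega> \<notin> bad n y"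
    show "\<forall>\<^sub>F n in sequentially. \<forall>y \<in> window_grid c \<xi> n. \<bar>emp_df X n \<omega> y - F y\<bar> \<le> mesh c n / 2"
      using good eventually_ge_at_top[of "1::nat"]
      by eventually_elim (use \<open>\<omega> \<in> space M\<close> in \<open>auto simp: bad_def emp_df_minus_F field_simps\<close>)
  qed
qed

lemma AE_eventually_window_deviation_le:
  assumes "0 < e" and incr: "\<And>a b. \<xi> - e \<le> a \<Longrightarrow> a \<le> b \<Longrightarrow> b \<le> \<xi> + e \<Longrightarrow> F b - F a \<le> d * (b - a)"
    and c: "64 * cov_sum \<le> c"
  shows "AE \<omega> in M. \<forall>\<^sub>F n in sequentially. \<forall>x \<in> {\<xi> - halfwidth c n .. \<xi> + halfwidth c n}.
    \<bar>(emp_df X n \<omega> x - F x) - (emp_df X n \<omega> \<xi> - F \<xi>)\<bar> \<le> (1 + d) * mesh c n"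
proof -
  have "0 < c" using c cov_sum_ge_1 by linarith
  show ?thesis
    using AE_eventually_grid_deviation_le[OF c, of \<xi>]
  proof (rule AE_mp, intro AE_I2 impI)
    fix \<omega> assume grid: "\<forall>\<^sub>F n in sequentially. \<forall>y \<in> window_grid c \<xi> n. \<bar>emp_df X n \<omega> y - F y\<bar> \<le> mesh c n / 2"
    show "\<forall>\<^sub>F n in sequentially. \<forall>x \<in> {\<xi> - halfwidth c n .. \<xi> + halfwidth c n}.
        \<bar>(emp_df X n \<omega> x - F x) - (emp_df X n \<omega> \<xi> - F \<xi>)\<bar> \<le> (1 + d) * mesh c n"
      using grid eventually_ge_at_top[of "2::nat"] eventually_halfwidth_nonneg[OF less_imp_le[OF \<open>0 < c\<close>]]
        order_tendstoD(2)[OF tendsto_halfwidth_plus_mesh[of c] \<open>0 < e\<close>]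
    proof eventually_elim
      case (elim n)
      then have "0 < mesh c n" using \<open>0 < c\<close> by (simp add: mesh_pos)
      with elim show ?case
        using grid_steps_bounds[OF \<open>0 < mesh c n\<close>]
        by (intro ballI mono_window_deviation_le[OF mono_emp_df mono_F \<open>0 < mesh c n\<close>] incr)
          (auto simp: window_grid_def)
    qed
  qed
qed

end

theorem theorem2p3:
  fixes M :: "'a measure" and X :: "nat \<Rightarrow> 'a \<Rightarrow> real"
    and F f :: "real \<Rightarrow> real" and N :: "real set" and p \<theta> :: real
  assumes "prob_space M"
    and rv: "\<And>i. X i \<in> borel_measurable M"
    and marg: "\<And>i x. i \<ge> 1 \<Longrightarrow> measure M {\<omega> \<in> space M. X i \<omega> \<le> x} = F x"
    and mixing: "decseq (phi_mix M X) \<and> phi_mix M X \<longlonglongrightarrow> 0"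
    and summ: "summable (\<lambda>n. sqrt (phi_mix M X (Suc n)))"
    and p: "0 < p" "p < 1"
    and N: "open N" "Inf {x. F x \<ge> p} \<in> N"
    and dens: "\<And>a b. a \<le> b \<Longrightarrow> {a..b} \<subseteq> N \<Longrightarrow> (f has_integral (F b - F a)) {a..b}"
    and fpos: "\<And>x. x \<in> N \<Longrightarrow> f x > 0"
    and fcont: "continuous_on N f"
    and fbdd: "bdd_above (f ` N)"
    and \<theta>: "\<theta> > 0"
  shows "let \<xi> = Inf {x. F x \<ge> p};
             d = Sup (f ` N);
             C3 = 4 * (1 + 4 * (\<Sum>n. sqrt (phi_mix M X (Suc n))));
             \<tau> = (\<lambda>n::nat. sqrt (16 * C3 + \<theta>) * ln (real n) powr (3/2)
                    / (sqrt (real n) * sqrt (ln (ln (real n)))))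
         in AE \<omega> in M. eventually (\<lambda>n. \<forall>x \<in> {\<xi> - \<tau> n .. \<xi> + \<tau> n}.
               \<bar>(emp_df X n \<omega> x - F x) - (emp_df X n \<omega> \<xi> - p)\<bar>
                 \<le> (1 + d) * sqrt ((16 * C3 + \<theta>) * ln (real n) / real n)) sequentially"
proof -
  interpret summably_phi_mixing M X F
    using assms(1) rv marg mixing summ
    by (intro summably_phi_mixing.intro random_sequence.intro summably_phi_mixing_axioms.intro
        random_sequence_axioms.intro) auto
  define \<xi> where "\<xi> = Inf {x. F x \<ge> p}"
  define d where "d = Sup (f ` N)"
  define c where "c = 16 * (4 * (1 + 4 * sqrt_phi_sum)) + \<theta>"
  obtain e where "0 < e" and incr: "\<And>a b. \<xi> - e \<le> a \<Longrightarrow> a \<le> b \<Longrightarrow> b \<le> \<xi> + e \<Longrightarrow> F b - F a \<le> d * (b - a)"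
    using increments_le_Sup_density_near[OF N(1) N(2)[folded \<xi>_def] dens fbdd] unfolding d_def by blast
  have "F \<xi> = p"
    using quantile_eq[OF mono_F F_tendsto_at_bot F_tendsto_at_top p] isCont_if_increments_le[OF mono_F \<open>0 < e\<close> incr]
    by (simp add: \<xi>_def)
  have "64 * cov_sum \<le> c"
    using cov_sum_le sqrt_phi_sum_nonneg \<theta> by (simp add: c_def)
  have "AE \<omega> in M. \<forall>\<^sub>F n in sequentially. \<forall>x \<in> {\<xi> - halfwidth c n .. \<xi> + halfwidth c n}.
      \<bar>(emp_df X n \<omega> x - F x) - (emp_df X n \<omega> \<xi> - F \<xi>)\<bar> \<le> (1 + d) * mesh c n"
    using \<open>0 < e\<close> incr \<open>64 * cov_sum \<le> c\<close> by (rule AE_eventually_window_deviation_le)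
  then show ?thesis
    unfolding \<open>F \<xi> = p\<close> unfolding Let_def \<xi>_def d_def c_def halfwidth_def mesh_def sqrt_phi_sum_def .
qed

end
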